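(* In the Poisson matching problem $PM(\lambda,\mu)$ with $0<\lambda\le\mu$ (defined in the context), the stable matching $\mathcal{M}_s$ is nested.
   Context: Poisson matching problem $PM(\lambda,\mu)$: $\mathcal{B}$ (blue points) and $\mathcal{R}$ (red points) are independent homogeneous Poisson point processes on $\mathbb{R}$ of intensities $\lambda$ and $\mu$ respectively; $\mathcal{S}=\mathcal{B}\cup\mathcal{R}$. A matching is a map $\mathcal{M}:\mathcal{S}\to\mathcal{S}\cup\{\infty\}$ with $\mathcal{M}(r)\in\mathcal{B}\cup\{\infty\}$ for red $r$, $\mathcal{M}(b)\in\mathcal{R}\cup\{\infty\}$ for blue $b$, and $\mathcal{M}(r)=b$ iff $\mathcal{M}(b)=r$. A matching is stable if there is no pair $(b,r)$ with $b\ne\mathcal{M}(r)$ and $|r-b|<\min(|r-\mathcal{M}(r)|,|b-\mathcal{M}(b)|)$. $\mathcal{M}_s$ is the stable matching produced by: every blue point simultaneously emits two rays, one in each direction, each at distance $t$ from its emitter at time $t$; when a ray hits an unmatched red point $r$, the emitter is matched to $r$ and both leave. For $x\in\mathcal{S}$, the matching segment $I_\mathcal{M}(x)$ is the open interval with endpoints $x$ and $\mathcal{M}(x)$ (equal to $(x,\infty)$ if $x$ is unmatched), and $\overline{I}$ denotes closure. A matching $\mathcal{M}$ is nested if for all $x,y\in\mathcal{S}$, $x\in I_\mathcal{M}(y)$ implies $\mathcal{M}(x)\in\overline{I}_\mathcal{M}(y)$. *)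

theory Defs
  imports "HOL-Probability.Probability"
begin

definition pcount :: "real set \<Rightarrow> real \<Rightarrow> real \<Rightarrow> nat" where
  "pcount N a b = card (N \<inter> {a<..b})"

definition poisson_pp :: "'w measure \<Rightarrow> real \<Rightarrow> ('w \<Rightarrow> real set) \<Rightarrow> bool" where
  "poisson_pp P lam N \<longleftrightarrow>
     (\<forall>\<omega>\<in>space P. \<forall>a b. finite (N \<omega> \<inter> {a..b})) \<and>
     (\<forall>a b. (\<lambda>\<omega>. pcount (N \<omega>) a b) \<in> measurable P (count_space UNIV)) \<and>
     (\<forall>a b k. a < b \<longrightarrow>
        measure P {\<omega>\<in>space P. pcount (N \<omega>) a b = k}
          = (lam * (b - a)) ^ k / fact k * exp (- (lam * (b - a))))"

text \<open>Independence
  (of the counts on disjoint intervals within each process, and of the two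
  processes from each other) is expressed through the finite-dimensional
  count vectors: for any pairwise disjoint intervals I_0..I_(n-1) (for B) and
  pairwise disjoint intervals J_0..J_(m-1) (for R), all these counts are
  mutually independent.\<close>

definition disjoint_intervals :: "(nat \<Rightarrow> real \<times> real) \<Rightarrow> nat \<Rightarrow> bool" where
  "disjoint_intervals I n \<longleftrightarrow>
     (\<forall>i<n. \<forall>j<n. i \<noteq> j \<longrightarrow>
        {fst (I i)<..snd (I i)} \<inter> {fst (I j)<..snd (I j)} = {})"

definition poisson_matching_model ::
  "'w measure \<Rightarrow> real \<Rightarrow> real \<Rightarrow> ('w \<Rightarrow> real set) \<Rightarrow> ('w \<Rightarrow> real set) \<Rightarrow> bool" where
  "poisson_matching_model P lam mu B R \<longleftrightarrow>
     prob_space P \<and> poisson_pp P lam B \<and> poisson_pp P mu R \<and>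
     (\<forall>I J n m. disjoint_intervals I n \<longrightarrow> disjoint_intervals J m \<longrightarrow>
        prob_space.indep_vars P (\<lambda>_. count_space UNIV)
          (\<lambda>(c, i) \<omega>. if c then pcount (B \<omega>) (fst (I i)) (snd (I i))
                             else pcount (R \<omega>) (fst (J i)) (snd (J i)))
          (({True} \<times> {..<n}) \<union> ({False} \<times> {..<m})))"

text \<open>A matching of the blue points B and red points R is a map
  M : S -> S + {infinity}, with None standing for infinity
  (i.e. "unmatched").\<close>

definition is_matching :: "real set \<Rightarrow> real set \<Rightarrow> (real \<Rightarrow> real option) \<Rightarrow> bool" where
  "is_matching B R M \<longleftrightarrow>
     (\<forall>r\<in>R. M r = None \<or> (\<exists>b\<in>B. M r = Some b)) \<and>
     (\<forall>b\<in>B. M b = None \<or> (\<exists>r\<in>R. M b = Some r)) \<and>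
     (\<forall>r\<in>R. \<forall>b\<in>B. M r = Some b \<longleftrightarrow> M b = Some r)"

definition partner :: "(real \<Rightarrow> real option) \<Rightarrow> real \<Rightarrow> ereal" where
  "partner M x = (case M x of None \<Rightarrow> PInfty | Some z \<Rightarrow> ereal z)"

text \<open>Time at which x gets matched in the ray process, namely its distance to
  its partner (infinity if never matched).\<close>
definition match_time :: "(real \<Rightarrow> real option) \<Rightarrow> real \<Rightarrow> ereal" where
  "match_time M x = (case M x of None \<Rightarrow> PInfty | Some z \<Rightarrow> ereal \<bar>x - z\<bar>)"

text \<open>M is the outcome of the ray process: every blue point b emits rays in
  both directions, at time t each ray is at distance t from b.  A matched
  pair (b,r) is matched at time |b - r|, so x is unmatched during the whole
  time interval before match_time M x.  The rule of the process: whenever a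
  ray of b hits a red point r (at time |b - r|) while both b and r are still
  unmatched, b is matched to r.\<close>
definition ray_matching :: "real set \<Rightarrow> real set \<Rightarrow> (real \<Rightarrow> real option) \<Rightarrow> bool" where
  "ray_matching B R M \<longleftrightarrow>
     is_matching B R M \<and>
     (\<forall>b\<in>B. \<forall>r\<in>R.
        ereal \<bar>b - r\<bar> \<le> match_time M b \<and> ereal \<bar>b - r\<bar> \<le> match_time M r
        \<longrightarrow> M b = Some r)"

definition match_seg :: "(real \<Rightarrow> real option) \<Rightarrow> real \<Rightarrow> ereal set" where
  "match_seg M x = {min (ereal x) (partner M x) <..< max (ereal x) (partner M x)}"

definition nested :: "real set \<Rightarrow> (real \<Rightarrow> real option) \<Rightarrow> bool" where
  "nested S M \<longleftrightarrow>
     (\<forall>x\<in>S. \<forall>y\<in>S. ereal x \<in> match_seg M y \<longrightarrow> partner M x \<in> closure (match_seg M y))"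

end

theory Submission
  imports Defs
begin

text \<open>Nestedness holds for every outcome of the ray process, not only almost surely.
  Colours play symmetric roles, so let x be blue and matched to q.  If x lies strictly
  inside the segment of a matched pair (b0, r0), then either the ray of x reaches r0
  before r0 is taken (so q = r0), or q is closer to x than r0 is; if q were outside
  the segment it would lie beyond b0 and be closer to b0 than r0, so b0 would have
  taken q first.  If x lies to the right of an unmatched point y and q < y, then y is
  closer to x than q (if y is red), or closer to q than x (if y is blue), and y, never
  being matched, would have been matched to x or q.\<close>

lemma match_time_Some: "M x = Some q \<Longrightarrow> match_time M x = ereal \<bar>x - q\<bar>"
  by (simp add: match_time_def)

lemma match_time_None: "M x = None \<Longrightarrow> match_time M x = PInfty"
  by (simp add: match_time_def)

lemma is_matching_partnerD:
  assumes "is_matching B R M" "x \<in> B" "M x = Some q"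
  shows "q \<in> R" "M q = Some x"
  using assms unfolding is_matching_def by force+

lemma is_matching_swap: "is_matching B R M \<longleftrightarrow> is_matching R B M"
  unfolding is_matching_def by blast

lemma ray_matching_is_matching: "ray_matching B R M \<Longrightarrow> is_matching B R M"
  unfolding ray_matching_def by blast

lemma ray_matchingD:
  assumes "ray_matching B R M" "b \<in> B" "r \<in> R"
    "ereal \<bar>b - r\<bar> \<le> match_time M b" "ereal \<bar>b - r\<bar> \<le> match_time M r"
  shows "M b = Some r"
  using assms unfolding ray_matching_def by blast

lemma ray_matching_swap:
  assumes "ray_matching B R M"
  shows "ray_matching R B M"
  unfolding ray_matching_def
proof (intro conjI ballI impI)
  have "is_matching B R M"
    using assms by (rule ray_matching_is_matching)
  then show "is_matching R B M"
    by (simp add: is_matching_swap)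
  fix r b assume "r \<in> R" "b \<in> B"
    and "ereal \<bar>r - b\<bar> \<le> match_time M r \<and> ereal \<bar>r - b\<bar> \<le> match_time M b"
  then have "M b = Some r"
    using ray_matchingD[OF assms] by (simp add: abs_minus_commute)
  then show "M r = Some b"
    using is_matching_partnerD(2)[OF \<open>is_matching B R M\<close> \<open>b \<in> B\<close>] by blast
qed

lemma ray_matching_inside_blue:
  assumes rm: "ray_matching B R M" and b0: "b0 \<in> B" and r0: "r0 \<in> R"
    and b0_r0: "M b0 = Some r0" and x: "x \<in> B"
    and inside: "min b0 r0 < x" "x < max b0 r0"
  shows "\<exists>q. M x = Some q \<and> min b0 r0 \<le> q \<and> q \<le> max b0 r0"
proof -
  have im: "is_matching B R M"
    using rm by (rule ray_matching_is_matching)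
  have time_b0: "match_time M b0 = ereal \<bar>b0 - r0\<bar>"
    using b0_r0 by (rule match_time_Some)
  have time_r0: "match_time M r0 = ereal \<bar>b0 - r0\<bar>"
    using is_matching_partnerD(2)[OF im b0 b0_r0] match_time_Some[of M r0 b0]
    by (simp add: abs_minus_commute)
  show ?thesis
  proof (cases "ereal \<bar>x - r0\<bar> \<le> match_time M x")
    case True
    then have "M x = Some r0"
      using ray_matchingD[OF rm x r0] time_r0 inside by auto
    then show ?thesis by auto
  next
    case False
    then obtain q where x_q: "M x = Some q"
      by (cases "M x") (auto simp: match_time_def)
    have closer: "\<bar>x - q\<bar> < \<bar>x - r0\<bar>"
      using False match_time_Some[of M x q] x_q by auto
    have q: "q \<in> R" and time_q: "match_time M q = ereal \<bar>x - q\<bar>"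
      using is_matching_partnerD[OF im x x_q] match_time_Some
      by (auto simp: abs_minus_commute)
    show ?thesis
    proof (rule ccontr)
      assume "\<not> ?thesis"
      then have outside: "q < min b0 r0 \<or> max b0 r0 < q"
        using x_q by auto
      then have "\<bar>b0 - q\<bar> < \<bar>x - q\<bar>" "\<bar>b0 - q\<bar> < \<bar>b0 - r0\<bar>"
        using closer inside by (smt (verit))+
      then have "M b0 = Some q"
        using ray_matchingD[OF rm b0 q] time_b0 time_q by auto
      then show False
        using b0_r0 outside by auto
    qed
  qed
qed

lemma ray_matching_inside:
  assumes rm: "ray_matching B R M" and y: "y \<in> B \<union> R" and y_p: "M y = Some p"
    and x: "x \<in> B \<union> R" and inside: "min y p < x" "x < max y p"
  shows "\<exists>q. M x = Some q \<and> min y p \<le> q \<and> q \<le> max y p"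
proof -
  have inside_blue: ?thesis if rm': "ray_matching B' R' M" and "x \<in> B'" "y \<in> B' \<union> R'"
    for B' R'
  proof (cases "y \<in> B'")
    case True
    then have "p \<in> R'"
      using is_matching_partnerD(1)[OF ray_matching_is_matching[OF rm'] _ y_p] by blast
    with ray_matching_inside_blue[OF rm' True _ y_p \<open>x \<in> B'\<close>] inside show ?thesis
      by blast
  next
    case False
    with that have "y \<in> R'" by blast
    then have "p \<in> B'" "M p = Some y"
      using is_matching_partnerD[OF ray_matching_is_matching[OF ray_matching_swap[OF rm']] _ y_p]
      by blast+
    with ray_matching_inside_blue[OF rm' _ \<open>y \<in> R'\<close> _ \<open>x \<in> B'\<close>] inside show ?thesis
      by (simp add: min.commute max.commute)
  qed
  show ?thesis
    using x y inside_blue[OF rm] inside_blue[OF ray_matching_swap[OF rm]] by blast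
qed

lemma ray_matching_right_of_unmatched_blue:
  assumes rm: "ray_matching B R M" and y: "y \<in> B \<union> R" and y_unmatched: "M y = None"
    and x: "x \<in> B" and "y < x" and x_q: "M x = Some q"
  shows "y \<le> q"
proof (rule ccontr)
  assume "\<not> y \<le> q"
  then have "q < y" by simp
  have im: "is_matching B R M"
    using rm by (rule ray_matching_is_matching)
  have time_y: "match_time M y = PInfty"
    using y_unmatched by (rule match_time_None)
  have time_x: "match_time M x = ereal \<bar>x - q\<bar>"
    using x_q by (rule match_time_Some)
  have q: "q \<in> R" and time_q: "match_time M q = ereal \<bar>x - q\<bar>"
    using is_matching_partnerD[OF im x x_q] match_time_Some by (auto simp: abs_minus_commute)
  consider "y \<in> B" | "y \<in> R" using y by blast
  then show False
  proof cases
    case 1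
    then have "M y = Some q"
      using ray_matchingD[OF rm 1 q] time_y time_q \<open>q < y\<close> \<open>y < x\<close> by auto
    with y_unmatched show False by simp
  next
    case 2
    then have "M x = Some y"
      using ray_matchingD[OF rm x 2] time_y time_x \<open>q < y\<close> \<open>y < x\<close> by auto
    with x_q \<open>q < y\<close> show False by simp
  qed
qed

lemma ray_matching_right_of_unmatched:
  assumes "ray_matching B R M" "y \<in> B \<union> R" "M y = None"
    and "x \<in> B \<union> R" "y < x" "M x = Some q"
  shows "y \<le> q"
  using assms ray_matching_right_of_unmatched_blue[of B R M]
    ray_matching_right_of_unmatched_blue[OF ray_matching_swap] by blast

lemma match_seg_None: "M y = None \<Longrightarrow> match_seg M y = {ereal y<..<PInfty}"
  by (simp add: match_seg_def partner_def)

lemma match_seg_Some: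
  "M y = Some p \<Longrightarrow> match_seg M y = {ereal (min y p)<..<ereal (max y p)}"
  by (simp add: match_seg_def partner_def min_def max_def)

lemma ray_matching_nested:
  assumes rm: "ray_matching B R M"
  shows "nested (B \<union> R) M"
  unfolding nested_def
proof (intro ballI impI)
  fix x y assume x: "x \<in> B \<union> R" and y: "y \<in> B \<union> R" and x_in: "ereal x \<in> match_seg M y"
  show "partner M x \<in> closure (match_seg M y)"
  proof (cases "M y")
    case None
    then have "y < x"
      using x_in by (simp add: match_seg_None)
    have closure: "closure (match_seg M y) = {ereal y..PInfty}"
      using None by (simp add: match_seg_None closure_greaterThanLessThan)
    show ?thesis
    proof (cases "M x")
      case None
      then show ?thesis by (simp add: closure partner_def)
    next
      case (Some q)
      with ray_matching_right_of_unmatched[OF rm y \<open>M y = None\<close> x \<open>y < x\<close>] show ?thesis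
        by (simp add: closure partner_def)
    qed
  next
    case (Some p)
    then have inside: "min y p < x" "x < max y p"
      using x_in by (auto simp: match_seg_Some min_def max_def split: if_splits)
    have closure: "closure (match_seg M y) = {ereal (min y p)..ereal (max y p)}"
      unfolding match_seg_Some[of M y p, OF Some]
      by (rule closure_greaterThanLessThan) (use inside in \<open>simp add: min_def max_def\<close>)
    obtain q where "M x = Some q" "min y p \<le> q" "q \<le> max y p"
      using ray_matching_inside[OF rm y Some x inside] by blast
    then show ?thesis by (simp add: closure partner_def min_def max_def)
  qed
qed

theorem lemma4p2:
  fixes P :: "'w measure" and lam mu :: real and B R :: "'w \<Rightarrow> real set"
  assumes "0 < lam" and "lam \<le> mu"
    and "poisson_matching_model P lam mu B R"
  shows "AE \<omega> in P. \<forall>M. ray_matching (B \<omega>) (R \<omega>) M \<longrightarrow> nested (B \<omega> \<union> R \<omega>) M"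
  by (rule AE_I2) (blast intro: ray_matching_nested)

end
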